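(* Let $n$ be a positive integer and $w_1\le\dots\le w_m$ a feasible partition of $n$ with partial sums $R_i=w_1+\dots+w_i$, $R_0=0$. Then for every $1\le i\le m$, $R_i \ge \frac{3w_i-1}{2}$.
   Context: A weighing partition of a positive integer $n$ is a multiset of positive integers summing to $n$ such that every integer $\ell$ with $1\le\ell\le n$ is a sum $\sum_j u_jw_j$ with $u_j\in\{-1,0,1\}$. A feasible partition of $n$ is a weighing partition of $n$ whose number of parts $m$ is minimal among all weighing partitions of $n$, written $w_1\le\dots\le w_m$. *)

theory Defs
  imports Complex_Main
begin

text \<open>A partition is represented by the list of its parts (w_1, ..., w_m);
  the multiset of parts is mset ws. Part j (0-based) is ws ! j.\<close>

definition weighing_partition :: "nat \<Rightarrow> nat list \<Rightarrow> bool" where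
  "weighing_partition n ws \<longleftrightarrow>
     (\<forall>w\<in>set ws. 0 < w) \<and> sum_list ws = n \<and>
     (\<forall>l\<in>{1..n}. \<exists>u :: nat \<Rightarrow> int.
        (\<forall>j<length ws. u j \<in> {-1, 0, 1}) \<and>
        int l = (\<Sum>j<length ws. u j * int (ws ! j)))"

definition feasible_partition :: "nat \<Rightarrow> nat list \<Rightarrow> bool" where
  "feasible_partition n ws \<longleftrightarrow>
     weighing_partition n ws \<and> sorted ws \<and>
     (\<forall>vs. weighing_partition n vs \<longrightarrow> length ws \<le> length vs)"

end

theory Submission
  imports Defs
begin

text \<open>If w_{k+1} \<ge> 2 R_k + 2, try to weigh l = n - 2 R_k - 1.
  Putting some part w_j with j > k not on the positive side costs at least w_j \<ge> 2 R_k + 2, so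
  the result is at most n - 2 R_k - 2; putting all of them on the positive side yields at least
  (n - R_k) - R_k. Either way l is missed.\<close>

lemma signed_sum_le_sum_minus:
  fixes u f :: "nat \<Rightarrow> int"
  assumes signs: "\<forall>j<N. u j \<in> {-1, 0, 1}" and nonneg: "\<forall>j<N. 0 \<le> f j"
    and "j0 < N" and "u j0 \<noteq> 1"
  shows "(\<Sum>j<N. u j * f j) \<le> (\<Sum>j<N. f j) - f j0"
proof -
  have j0: "j0 \<in> {..<N}" using \<open>j0 < N\<close> by simp
  have "u j0 * f j0 \<le> 0"
    using signs nonneg \<open>j0 < N\<close> \<open>u j0 \<noteq> 1\<close> by (auto simp: mult_le_0_iff)
  moreover have "(\<Sum>j\<in>{..<N} - {j0}. u j * f j) \<le> (\<Sum>j\<in>{..<N} - {j0}. f j)"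
    using signs nonneg by (intro sum_mono) auto
  ultimately show ?thesis
    using sum.remove[OF _ j0, of "\<lambda>j. u j * f j"] sum.remove[OF _ j0, of f] by simp
qed

lemma signed_sum_ge_suffix_minus_prefix:
  fixes u f :: "nat \<Rightarrow> int"
  assumes signs: "\<forall>j<N. u j \<in> {-1, 0, 1}" and nonneg: "\<forall>j<N. 0 \<le> f j"
    and suffix: "\<forall>j\<in>{k..<N}. u j = 1" and "k \<le> N"
  shows "(\<Sum>j<N. u j * f j) \<ge> (\<Sum>j\<in>{k..<N}. f j) - (\<Sum>j<k. f j)"
proof -
  have split: "(\<Sum>j<N. g j) = (\<Sum>j<k. g j) + (\<Sum>j\<in>{k..<N}. g j)" for g :: "nat \<Rightarrow> int"
    using \<open>k \<le> N\<close> by (metis atLeast0LessThan sum.atLeastLessThan_concat zero_le)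
  have "- f j \<le> u j * f j" if "j < k" for j
  proof -
    have "u j \<in> {-1, 0, 1}" "0 \<le> f j" using signs nonneg that \<open>k \<le> N\<close> by auto
    then show ?thesis by auto
  qed
  then have "(\<Sum>j<k. - f j) \<le> (\<Sum>j<k. u j * f j)"
    by (intro sum_mono) simp
  moreover have "(\<Sum>j\<in>{k..<N}. u j * f j) = (\<Sum>j\<in>{k..<N}. f j)"
    using suffix by simp
  ultimately show ?thesis
    using split[of "\<lambda>j. u j * f j"] by (simp add: sum_negf)
qed

lemma weighing_partition_sorted_nth_le:
  assumes wp: "weighing_partition n ws" and "sorted ws" and "k < length ws"
  shows "ws ! k \<le> 2 * sum_list (take k ws) + 1"
proof (rule ccontr)
  define N where "N = length ws"
  define f where "f j = int (ws ! j)" for j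
  define R where "R = sum_list (take k ws)"
  assume "\<not> ws ! k \<le> 2 * sum_list (take k ws) + 1"
  then have big: "2 * R + 2 \<le> ws ! k" unfolding R_def by simp
  have n_sum: "int n = (\<Sum>j<N. f j)"
    using wp by (simp add: weighing_partition_def N_def f_def sum_list_sum_nth atLeast0LessThan
        flip: of_nat_sum)
  have R_sum: "int R = (\<Sum>j<k. f j)"
    using \<open>k < length ws\<close>
    by (simp add: R_def f_def sum_list_sum_nth atLeast0LessThan min_def flip: of_nat_sum)
  have "R + ws ! k = sum_list (take (Suc k) ws)"
    using \<open>k < length ws\<close> by (simp add: R_def take_Suc_conv_app_nth)
  also have "\<dots> \<le> sum_list (take (Suc k) ws @ drop (Suc k) ws)"
    unfolding sum_list_append by simp
  also have "\<dots> = n" using wp by (simp add: weighing_partition_def)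
  finally have "R + ws ! k \<le> n" .
  then have "n - 2 * R - 1 \<in> {1..n}" using big by auto
  then obtain u :: "nat \<Rightarrow> int" where signs: "\<forall>j<N. u j \<in> {-1, 0, 1}"
      and weighs: "int (n - 2 * R - 1) = (\<Sum>j<N. u j * f j)"
    using wp unfolding weighing_partition_def N_def f_def by blast
  have l_eq: "int (n - 2 * R - 1) = int n - 2 * int R - 1"
    using \<open>R + ws ! k \<le> n\<close> big by simp
  have nonneg: "\<forall>j<N. 0 \<le> f j" by (simp add: f_def)
  show False
  proof (cases "\<forall>j\<in>{k..<N}. u j = 1")
    case True
    have "(\<Sum>j<N. f j) = (\<Sum>j<k. f j) + (\<Sum>j\<in>{k..<N}. f j)"
      using \<open>k < length ws\<close> unfolding N_def
      by (metis atLeast0LessThan less_imp_le sum.atLeastLessThan_concat zero_le)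
    then have "(\<Sum>j\<in>{k..<N}. f j) = int n - int R" using n_sum R_sum by simp
    then show False
      using signed_sum_ge_suffix_minus_prefix[OF signs nonneg True] \<open>k < length ws\<close>
        weighs l_eq R_sum
      by (simp add: N_def)
  next
    case False
    then obtain j0 where j0: "k \<le> j0" "j0 < N" "u j0 \<noteq> 1" by auto
    have "f k \<le> f j0"
      using \<open>sorted ws\<close> j0 by (simp add: f_def N_def sorted_nth_mono)
    then show False
      using signed_sum_le_sum_minus[OF signs nonneg j0(2,3)] weighs l_eq n_sum big
      by (simp add: f_def)
  qed
qed

theorem mainTheorem4:
  fixes n :: nat and ws :: "nat list" and i :: nat
  assumes "0 < n"
    and "feasible_partition n ws"
    and "1 \<le> i" and "i \<le> length ws"
  shows "real (sum_list (take i ws)) \<ge> (3 * real (ws ! (i - 1)) - 1) / 2"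
proof -
  obtain k where i: "i = Suc k" using \<open>1 \<le> i\<close> by (cases i) auto
  then have "k < length ws" using \<open>i \<le> length ws\<close> by simp
  have "ws ! k \<le> 2 * sum_list (take k ws) + 1"
    using assms(2) \<open>k < length ws\<close>
    by (intro weighing_partition_sorted_nth_le) (auto simp: feasible_partition_def)
  moreover have "sum_list (take i ws) = sum_list (take k ws) + ws ! k"
    using i \<open>k < length ws\<close> by (simp add: take_Suc_conv_app_nth)
  ultimately show ?thesis using i by simp
qed

end
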